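(* Let $V$ be an $n$-dimensional complex vector space, $\Lambda(V\otimes V^* )$ the exterior algebra on $V\otimes V^*$, $X=(x_{ij})_{1\le i,j\le n}\in\operatorname{Mat}_{n,n}(\Lambda(V\otimes V^* ))$, let $v={}^t(v_1,\ldots,v_n)$, $w={}^t(w_1,\ldots,w_n)$ with $v_i,w_i\in\mathbb{C}$ arbitrary, and put $$Q=\sum_{\sigma\in S_{n+1}}\sum_{1\le i_1,\ldots,i_{n+1}\le n}\operatorname{sgn}(\sigma)(X^2)_{i_1i_{\sigma(1)}}\cdots(X^2)_{i_{n-1}i_{\sigma(n-1)}}X_{i_ni_{\sigma(n)}}v_{i_{n+1}}w_{i_{\sigma(n+1)}}.$$ Then $$Q=(-1)^n\Big\{n!\,{}^tw X^{2n-1}v-(n-1)!\sum_{0\le k\le n-1}\operatorname{tr}(X^{2k+1})\,{}^tw X^{2n-2-2k}v\Big\}.$$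
   Context: $e_1,\ldots,e_n$ is a basis of $V$, $e_i^*$ its dual basis, $x_{ij}=e_i\otimes e_j^*$ is the standard basis of $V\otimes V^*$. Products in the exterior algebra are wedge products, and all products of entries are taken in the order written; $X^0$ is the identity matrix. *)

theory Defs
  imports Complex_Main "HOL-Combinatorics.Permutations"
begin

text \<open>Exterior algebra on the space with basis x_ij (generators indexed by pairs (i,j)).
An element is represented by its coefficient function on the standard monomial basis:
the monomial indexed by a finite set S of generators is the wedge product of the
elements of S in increasing (lexicographic) order.\<close>

type_synonym ext = "(nat \<times> nat) set \<Rightarrow> complex"

definition gen_less :: "nat \<times> nat \<Rightarrow> nat \<times> nat \<Rightarrow> bool" where
  "gen_less p q \<longleftrightarrow> fst p < fst q \<or> (fst p = fst q \<and> snd p < snd q)"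

text \<open>sign of reordering e_S wedge e_T (S, T disjoint) into increasing order\<close>
definition shuffle_sign :: "(nat \<times> nat) set \<Rightarrow> (nat \<times> nat) set \<Rightarrow> complex" where
  "shuffle_sign S T = (-1) ^ card {(s, t). s \<in> S \<and> t \<in> T \<and> gen_less t s}"

definition ext_zero :: ext where "ext_zero = (\<lambda>S. 0)"

definition ext_scalar :: "complex \<Rightarrow> ext" where
  "ext_scalar c = (\<lambda>S. if S = {} then c else 0)"

definition ext_gen :: "nat \<Rightarrow> nat \<Rightarrow> ext" where
  "ext_gen i j = (\<lambda>S. if S = {(i, j)} then 1 else 0)"

definition ext_add :: "ext \<Rightarrow> ext \<Rightarrow> ext" where
  "ext_add a b = (\<lambda>S. a S + b S)"

definition ext_smult :: "complex \<Rightarrow> ext \<Rightarrow> ext" where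
  "ext_smult c a = (\<lambda>S. c * a S)"

definition ext_sum :: "('i \<Rightarrow> ext) \<Rightarrow> 'i set \<Rightarrow> ext" where
  "ext_sum f I = (\<lambda>S. \<Sum>k\<in>I. f k S)"

definition ext_mult :: "ext \<Rightarrow> ext \<Rightarrow> ext" where
  "ext_mult a b = (\<lambda>U. \<Sum>S\<in>Pow U. a S * b (U - S) * shuffle_sign S (U - S))"

definition ext_prod_list :: "ext list \<Rightarrow> ext" where
  "ext_prod_list xs = foldr ext_mult xs (ext_scalar 1)"

text \<open>n x n matrices over the exterior algebra, indices 0..n-1\<close>
type_synonym emat = "nat \<Rightarrow> nat \<Rightarrow> ext"

definition Xmat :: emat where "Xmat = (\<lambda>i j. ext_gen i j)"

definition mat_mult :: "nat \<Rightarrow> emat \<Rightarrow> emat \<Rightarrow> emat" where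
  "mat_mult n A B = (\<lambda>i j. ext_sum (\<lambda>k. ext_mult (A i k) (B k j)) {..<n})"

definition mat_id :: emat where
  "mat_id = (\<lambda>i j. if i = j then ext_scalar 1 else ext_zero)"

fun mat_pow :: "nat \<Rightarrow> emat \<Rightarrow> nat \<Rightarrow> emat" where
  "mat_pow n A 0 = mat_id"
| "mat_pow n A (Suc m) = mat_mult n (mat_pow n A m) A"

definition mat_trace :: "nat \<Rightarrow> emat \<Rightarrow> ext" where
  "mat_trace n A = ext_sum (\<lambda>i. A i i) {..<n}"

definition bilin :: "nat \<Rightarrow> (nat \<Rightarrow> complex) \<Rightarrow> emat \<Rightarrow> (nat \<Rightarrow> complex) \<Rightarrow> ext" where
  "bilin n w A v = ext_sum (\<lambda>(i, j). ext_smult (w i * v j) (A i j)) ({..<n} \<times> {..<n})"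

text \<open>The quantity Q (0-indexed: sigma permutes {0..n}, positions 0..n-2 carry X^2,
position n-1 carries X, position n carries v_(i_n) w_(i_(sigma n)))\<close>
definition Qsum :: "nat \<Rightarrow> (nat \<Rightarrow> complex) \<Rightarrow> (nat \<Rightarrow> complex) \<Rightarrow> ext" where
  "Qsum n v w =
     ext_sum (\<lambda>\<sigma>. ext_sum (\<lambda>i.
        ext_smult (of_int (sign \<sigma>) * v (i n) * w (i (\<sigma> n)))
          (ext_prod_list
             (map (\<lambda>k. mat_pow n Xmat 2 (i k) (i (\<sigma> k))) [0..<n - 1]
              @ [Xmat (i (n - 1)) (i (\<sigma> (n - 1)))])))
       ({0..n} \<rightarrow>\<^sub>E {..<n}))
     {\<sigma>. \<sigma> permutes {0..n}}"

end

theory Submission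
  imports Defs
begin

text \<open>
  \<open>Q\<close> antisymmetrises \<open>n + 1\<close> row indices that range over only \<open>n\<close> values, so \<open>Q = 0\<close>,
  and what has to be shown is that the right-hand side vanishes:
  \<open>\<Sum>\<^sub>k<\<^sub>n tr(X^(2k+1)) \<cdot> w\<^sup>t X^(2n-2-2k) v = n \<cdot> w\<^sup>t X^(2n-1) v\<close>.

  Adjoin the generator \<open>\<theta> = x\<^sub>n\<^sub>n\<close>, which does not occur in \<open>X\<close>, and work over the commutative
  ring of even elements. There \<open>Y = X\<^sup>2\<close>, \<open>Z = \<theta>X\<close> and \<open>B = v w\<^sup>t\<close> are matrices, \<open>Y\<close> and
  \<open>Z\<close> commute, and \<open>tr Y^k = tr X^(2k) = 0\<close> for \<open>k \<ge> 1\<close> because the entries of \<open>X\<close>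
  anticommute. The antisymmetrised trace of the \<open>n + 1\<close> matrices \<open>Y, \<dots>, Y, Z, B\<close> vanishes by
  the same pigeonhole argument as \<open>Q\<close>, while expanding it factor by factor (a polarised
  Cayley--Hamilton recursion) evaluates it to \<open>\<plusminus>(n-1)! \<theta> (LHS - RHS)\<close>. As \<open>\<theta>\<close> does not
  occur in \<open>LHS - RHS\<close>, this forces \<open>LHS = RHS\<close>.
\<close>

section \<open>The exterior algebra as a ring\<close>

definition inversions :: "(nat \<times> nat) set \<Rightarrow> (nat \<times> nat) set \<Rightarrow> ((nat \<times> nat) \<times> (nat \<times> nat)) set" where
  "inversions S T = {(s, t). s \<in> S \<and> t \<in> T \<and> gen_less t s}"

lemma shuffle_sign_eq: "shuffle_sign S T = (-1) ^ card (inversions S T)"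
  by (simp add: shuffle_sign_def inversions_def)

lemma finite_inversions: "finite S \<Longrightarrow> finite T \<Longrightarrow> finite (inversions S T)"
  by (rule finite_subset[of _ "S \<times> T"]) (auto simp: inversions_def)

lemma card_inversions_Un_left:
  assumes "finite A" "finite B" "finite C" "A \<inter> B = {}"
  shows "card (inversions (A \<union> B) C) = card (inversions A C) + card (inversions B C)"
proof -
  have "inversions (A \<union> B) C = inversions A C \<union> inversions B C"
    "inversions A C \<inter> inversions B C = {}"
    using assms(4) by (auto simp: inversions_def)
  then show ?thesis by (simp add: card_Un_disjoint finite_inversions assms)
qed

lemma card_inversions_Un_right:
  assumes "finite A" "finite B" "finite C" "B \<inter> C = {}"
  shows "card (inversions A (B \<union> C)) = card (inversions A B) + card (inversions A C)"
proof -
  have "inversions A (B \<union> C) = inversions A B \<union> inversions A C"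
    "inversions A B \<inter> inversions A C = {}"
    using assms(4) by (auto simp: inversions_def)
  then show ?thesis by (simp add: card_Un_disjoint finite_inversions assms)
qed

lemma shuffle_sign_assoc:
  assumes "finite R" "finite T" "finite W" "R \<inter> T = {}" "R \<inter> W = {}" "T \<inter> W = {}"
  shows "shuffle_sign R T * shuffle_sign (R \<union> T) W = shuffle_sign T W * shuffle_sign R (T \<union> W)"
  using assms
  by (simp add: shuffle_sign_eq card_inversions_Un_left card_inversions_Un_right
      power_add[symmetric] ac_simps)

lemma sum_Pow_Pow_reindex:
  assumes "finite U"
  shows "(\<Sum>S\<in>Pow U. \<Sum>R\<in>Pow S. F R S) = (\<Sum>R\<in>Pow U. \<Sum>T\<in>Pow (U - R). F R (R \<union> T))"
proof -
  have "(\<Sum>S\<in>Pow U. \<Sum>R\<in>Pow S. F R S) = (\<Sum>(S, R)\<in>Sigma (Pow U) Pow. F R S)"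
    using assms by (subst sum.Sigma) (auto intro: finite_subset)
  also have "\<dots> = (\<Sum>(R, T)\<in>Sigma (Pow U) (\<lambda>R. Pow (U - R)). F R (R \<union> T))"
    by (rule sum.reindex_bij_witness[where i="\<lambda>(R, T). (R \<union> T, R)" and j="\<lambda>(S, R). (R, S - R)"])
      (auto simp: Un_absorb1)
  also have "\<dots> = (\<Sum>R\<in>Pow U. \<Sum>T\<in>Pow (U - R). F R (R \<union> T))"
    using assms by (subst sum.Sigma) auto
  finally show ?thesis .
qed

lemma ext_mult_infinite: "infinite U \<Longrightarrow> ext_mult a b U = 0"
  by (simp add: ext_mult_def)

lemma ext_mult_assoc: "ext_mult (ext_mult a b) c = ext_mult a (ext_mult b c)"
proof
  fix U
  show "ext_mult (ext_mult a b) c U = ext_mult a (ext_mult b c) U"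
  proof (cases "finite U")
    case False
    then show ?thesis by (simp add: ext_mult_infinite)
  next
    case True
    have "ext_mult (ext_mult a b) c U = (\<Sum>S\<in>Pow U. \<Sum>R\<in>Pow S.
        a R * b (S - R) * shuffle_sign R (S - R) * c (U - S) * shuffle_sign S (U - S))"
      by (simp add: ext_mult_def sum_distrib_right)
    also have "\<dots> = (\<Sum>R\<in>Pow U. \<Sum>T\<in>Pow (U - R). a R * b (R \<union> T - R) * shuffle_sign R (R \<union> T - R)
        * c (U - (R \<union> T)) * shuffle_sign (R \<union> T) (U - (R \<union> T)))"
      using True by (rule sum_Pow_Pow_reindex)
    also have "\<dots> = (\<Sum>R\<in>Pow U. \<Sum>T\<in>Pow (U - R).
        a R * (b T * c (U - R - T) * shuffle_sign T (U - R - T)) * shuffle_sign R (U - R))"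
    proof (intro sum.cong refl)
      fix R T assume R: "R \<in> Pow U" and T: "T \<in> Pow (U - R)"
      have fin: "finite R" "finite T" "finite (U - R - T)"
        using R T True by (auto intro: finite_subset)
      have "U - R = T \<union> (U - R - T)" "R \<union> T - R = T" "U - (R \<union> T) = U - R - T"
        using T by auto
      with shuffle_sign_assoc[OF fin] T
      show "a R * b (R \<union> T - R) * shuffle_sign R (R \<union> T - R) * c (U - (R \<union> T))
          * shuffle_sign (R \<union> T) (U - (R \<union> T))
        = a R * (b T * c (U - R - T) * shuffle_sign T (U - R - T)) * shuffle_sign R (U - R)"
        by (auto simp: algebra_simps)
    qed
    also have "\<dots> = ext_mult a (ext_mult b c) U"
      by (simp add: ext_mult_def sum_distrib_left sum_distrib_right Diff_Diff_Int ac_simps)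
    finally show ?thesis .
  qed
qed

lemma shuffle_sign_empty [simp]: "shuffle_sign {} T = 1" "shuffle_sign S {} = 1"
  by (simp_all add: shuffle_sign_def)

lemma ext_mult_scalar_left: "finite U \<Longrightarrow> ext_mult (ext_scalar c) b U = c * b U"
proof -
  assume "finite U"
  have "ext_mult (ext_scalar c) b U = (\<Sum>S\<in>Pow U. if S = {} then c * b U else 0)"
    unfolding ext_mult_def by (intro sum.cong) (auto simp: ext_scalar_def)
  with \<open>finite U\<close> show ?thesis by (simp add: sum.delta)
qed

lemma ext_mult_scalar_right: "finite U \<Longrightarrow> ext_mult b (ext_scalar c) U = c * b U"
proof -
  assume "finite U"
  have "ext_mult b (ext_scalar c) U = (\<Sum>S\<in>Pow U. if S = U then c * b U else 0)"
    unfolding ext_mult_def by (intro sum.cong) (auto simp: ext_scalar_def)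
  with \<open>finite U\<close> show ?thesis by (simp add: sum.delta)
qed

lemma ext_mult_add_left: "ext_mult (ext_add a b) c = ext_add (ext_mult a c) (ext_mult b c)"
  by (simp add: ext_mult_def ext_add_def fun_eq_iff sum.distrib algebra_simps)

lemma ext_mult_add_right: "ext_mult c (ext_add a b) = ext_add (ext_mult c a) (ext_mult c b)"
  by (simp add: ext_mult_def ext_add_def fun_eq_iff sum.distrib algebra_simps)

text \<open>\<^const>\<open>ext_mult\<close> is zero on infinite sets of generators, so it is associative and unital
  only on coefficient functions that vanish there.\<close>

definition finitary :: "ext \<Rightarrow> bool" where
  "finitary a \<longleftrightarrow> (\<forall>S. infinite S \<longrightarrow> a S = 0)"

typedef exterior = "{a. finitary a}" morphisms coeff Abs_exterior
  by (rule exI[of _ ext_zero]) (simp add: finitary_def ext_zero_def)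

lemma coeff_infinite: "infinite S \<Longrightarrow> coeff a S = 0"
  using coeff[of a] by (simp add: finitary_def)

lemma exterior_eqI: "(\<And>S. coeff a S = coeff b S) \<Longrightarrow> a = b"
  by (metis coeff_inverse ext)

lemma coeff_Abs_exterior: "finitary a \<Longrightarrow> coeff (Abs_exterior a) = a"
  by (simp add: Abs_exterior_inverse)

lemma finitary_ext_mult: "finitary (ext_mult a b)"
  by (simp add: finitary_def ext_mult_infinite)

instantiation exterior :: ring_1
begin

definition "0 = Abs_exterior ext_zero"
definition "1 = Abs_exterior (ext_scalar 1)"
definition "a + b = Abs_exterior (ext_add (coeff a) (coeff b))"
definition "- a = Abs_exterior (\<lambda>S. - coeff a S)"
definition "a - b = Abs_exterior (\<lambda>S. coeff a S - coeff b S)"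
definition "a * b = Abs_exterior (ext_mult (coeff a) (coeff b))"

lemma coeff_zero [simp]: "coeff 0 = ext_zero"
  by (simp add: zero_exterior_def coeff_Abs_exterior finitary_def ext_zero_def)

lemma coeff_one [simp]: "coeff 1 = ext_scalar 1"
  by (simp add: one_exterior_def coeff_Abs_exterior finitary_def ext_scalar_def)

lemma coeff_add [simp]: "coeff (a + b) = ext_add (coeff a) (coeff b)"
  by (simp add: plus_exterior_def coeff_Abs_exterior finitary_def ext_add_def coeff_infinite)

lemma coeff_uminus [simp]: "coeff (- a) = (\<lambda>S. - coeff a S)"
  by (simp add: uminus_exterior_def coeff_Abs_exterior finitary_def coeff_infinite)

lemma coeff_diff [simp]: "coeff (a - b) = (\<lambda>S. coeff a S - coeff b S)"
  by (simp add: minus_exterior_def coeff_Abs_exterior finitary_def coeff_infinite)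

lemma coeff_mult [simp]: "coeff (a * b) = ext_mult (coeff a) (coeff b)"
  by (simp add: times_exterior_def coeff_Abs_exterior finitary_ext_mult)

instance
proof
  fix a b c :: exterior
  show "a * b * c = a * (b * c)"
    by (rule exterior_eqI) (simp add: ext_mult_assoc)
  show "(a + b) * c = a * c + b * c"
    by (rule exterior_eqI) (simp add: ext_mult_add_left)
  show "a * (b + c) = a * b + a * c"
    by (rule exterior_eqI) (simp add: ext_mult_add_right)
  show "a + b + c = a + (b + c)" "a + b = b + a" "0 + a = a" "- a + a = 0" "a - b = a + - b"
    by (rule exterior_eqI; simp add: ext_add_def ext_zero_def)+
  show "1 * a = a" "a * 1 = a"
    by (rule exterior_eqI, case_tac "finite S";
        simp add: ext_mult_scalar_left ext_mult_scalar_right ext_mult_infinite coeff_infinite)+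
  have "coeff (0 :: exterior) {} \<noteq> coeff 1 {}"
    by (simp add: ext_zero_def ext_scalar_def)
  then show "(0 :: exterior) \<noteq> 1" by metis
qed

end

definition scalar :: "complex \<Rightarrow> exterior" where
  "scalar c = Abs_exterior (ext_scalar c)"

definition generator :: "nat \<Rightarrow> nat \<Rightarrow> exterior" where
  "generator i j = Abs_exterior (ext_gen i j)"

lemma coeff_scalar [simp]: "coeff (scalar c) = ext_scalar c"
  by (simp add: scalar_def coeff_Abs_exterior finitary_def ext_scalar_def)

lemma coeff_generator [simp]: "coeff (generator i j) = ext_gen i j"
  by (simp add: generator_def coeff_Abs_exterior finitary_def ext_gen_def)

lemma coeff_scalar_mult: "coeff (scalar c * a) = ext_smult c (coeff a)"
  by (rule ext, case_tac "finite x") (simp_all add: ext_mult_scalar_left ext_mult_infinite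
      coeff_infinite ext_smult_def)

lemma scalar_commute: "scalar c * a = a * scalar c"
  by (rule exterior_eqI, case_tac "finite S")
    (simp_all add: ext_mult_scalar_left ext_mult_scalar_right ext_mult_infinite)

lemma scalar_mult: "scalar (c * d) = scalar c * scalar d"
  by (rule exterior_eqI, case_tac "finite S")
    (simp_all add: ext_mult_scalar_left ext_mult_infinite, auto simp: ext_scalar_def)

lemma scalar_add: "scalar (c + d) = scalar c + scalar d"
  by (rule exterior_eqI) (auto simp: ext_add_def ext_scalar_def)

lemma scalar_zero [simp]: "scalar 0 = 0"
  by (rule exterior_eqI) (simp add: ext_scalar_def ext_zero_def)

lemma scalar_one [simp]: "scalar 1 = 1"
  by (rule exterior_eqI) simp

lemma scalar_uminus: "scalar (- c) = - scalar c"
  by (rule exterior_eqI) (auto simp: ext_scalar_def)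

lemma scalar_of_nat: "scalar (of_nat k) = of_nat k"
  by (induction k) (simp_all add: scalar_add)

lemma scalar_fact: "scalar (fact k) = of_nat (fact k)"
  using scalar_of_nat[of "fact k"] by simp

lemma scalar_power: "scalar (c ^ k) = scalar c ^ k"
  by (induction k) (simp_all add: scalar_mult)

lemma coeff_sum: "coeff (sum f I) = ext_sum (\<lambda>k. coeff (f k)) I"
  by (induction I rule: infinite_finite_induct) (simp_all add: ext_sum_def ext_zero_def ext_add_def)

section \<open>Parity and graded commutativity\<close>

lemma gen_less_total: "s \<noteq> t \<Longrightarrow> gen_less s t \<or> gen_less t s"
  by (cases s; cases t) (auto simp: gen_less_def)

lemma gen_less_asym: "gen_less s t \<Longrightarrow> \<not> gen_less t s"
  by (auto simp: gen_less_def)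

lemma card_inversions_swap:
  assumes "finite S" "finite T" "S \<inter> T = {}"
  shows "card (inversions S T) + card (inversions T S) = card S * card T"
proof -
  define A where "A = {p \<in> S \<times> T. gen_less (snd p) (fst p)}"
  define B where "B = {p \<in> S \<times> T. gen_less (fst p) (snd p)}"
  have "inversions S T = A" "inversions T S = prod.swap ` B"
    unfolding A_def B_def inversions_def by force+
  then have "card (inversions T S) = card B"
    by (simp add: card_image)
  have "fst p \<noteq> snd p" if "p \<in> S \<times> T" for p
    using that assms(3) by auto
  then have "S \<times> T = A \<union> B"
    unfolding A_def B_def using gen_less_total by blast
  moreover have "A \<inter> B = {}"
    unfolding A_def B_def using gen_less_asym by blast
  moreover have "finite A" "finite B"
    unfolding A_def B_def using assms by simp_all
  ultimately have "card S * card T = card A + card B"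
    by (metis card_Un_disjoint card_cartesian_product)
  with \<open>inversions S T = A\<close> \<open>card (inversions T S) = card B\<close> show ?thesis
    by simp
qed

lemma shuffle_sign_swap:
  assumes "finite S" "finite T" "S \<inter> T = {}"
  shows "shuffle_sign S T = (-1) ^ (card S * card T) * shuffle_sign T S"
proof -
  have square: "((-1 :: complex) ^ k) ^ 2 = 1" for k
    by (simp add: power2_eq_square flip: power_add)
  have "(-1 :: complex) ^ (card S * card T) * shuffle_sign T S
      = (-1) ^ card (inversions S T) * ((-1) ^ card (inversions T S)) ^ 2"
    by (simp add: shuffle_sign_eq card_inversions_swap[OF assms, symmetric] power_add power2_eq_square)
  then show ?thesis
    by (simp add: shuffle_sign_eq square)
qed

lemma ext_mult_commute_sign:
  assumes "\<And>S T. a S \<noteq> 0 \<Longrightarrow> b T \<noteq> 0 \<Longrightarrow> (-1) ^ (card S * card T) = c"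
  shows "ext_mult a b = ext_smult c (ext_mult b a)"
proof
  fix U
  show "ext_mult a b U = ext_smult c (ext_mult b a) U"
  proof (cases "finite U")
    case False
    then show ?thesis by (simp add: ext_mult_infinite ext_smult_def)
  next
    case True
    have "ext_mult b a U = (\<Sum>S\<in>Pow U. b (U - S) * a (U - (U - S)) * shuffle_sign (U - S) (U - (U - S)))"
      unfolding ext_mult_def
      by (rule sum.reindex_bij_witness[where i="\<lambda>S. U - S" and j="\<lambda>S. U - S"])
        (auto simp: Diff_Diff_Int Int_absorb1)
    also have "\<dots> = (\<Sum>S\<in>Pow U. b (U - S) * a S * shuffle_sign (U - S) S)"
      by (intro sum.cong refl) (auto simp: Diff_Diff_Int Int_absorb1)
    finally have swapped: "ext_mult b a U = \<dots>" .
    have termwise: "a S * b (U - S) * shuffle_sign S (U - S) = c * (b (U - S) * a S * shuffle_sign (U - S) S)"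
      if "S \<subseteq> U" for S
    proof (cases "a S = 0 \<or> b (U - S) = 0")
      case False
      then show ?thesis
        using assms[of S "U - S"] shuffle_sign_swap[of S "U - S"] \<open>finite U\<close> that
        by (auto intro: finite_subset)
    qed auto
    have "ext_mult a b U = (\<Sum>S\<in>Pow U. c * (b (U - S) * a S * shuffle_sign (U - S) S))"
      unfolding ext_mult_def using termwise by (intro sum.cong) auto
    also have "\<dots> = c * ext_mult b a U"
      by (simp add: swapped sum_distrib_left)
    finally show ?thesis
      by (simp add: ext_smult_def)
  qed
qed

definition has_parity :: "nat \<Rightarrow> exterior \<Rightarrow> bool" where
  "has_parity p a \<longleftrightarrow> (\<forall>S. coeff a S \<noteq> 0 \<longrightarrow> card S mod 2 = p)"

lemma even_commute:
  assumes "has_parity 0 a"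
  shows "a * b = b * a"
proof (rule exterior_eqI)
  have "ext_mult (coeff a) (coeff b) = ext_smult 1 (ext_mult (coeff b) (coeff a))"
    by (rule ext_mult_commute_sign) (use assms in \<open>auto simp: has_parity_def\<close>)
  then show "coeff (a * b) S = coeff (b * a) S" for S
    by (simp add: ext_smult_def)
qed

lemma odd_anticommute:
  assumes "has_parity 1 a" "has_parity 1 b"
  shows "a * b = - (b * a)"
proof (rule exterior_eqI)
  have "ext_mult (coeff a) (coeff b) = ext_smult (-1) (ext_mult (coeff b) (coeff a))"
    by (rule ext_mult_commute_sign) (use assms in \<open>auto simp: has_parity_def odd_iff_mod_2_eq_one\<close>)
  then show "coeff (a * b) S = coeff (- (b * a)) S" for S
    by (simp add: ext_smult_def)
qed

lemma has_parity_mult: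
  assumes a: "has_parity p a" and b: "has_parity q b"
  shows "has_parity ((p + q) mod 2) (a * b)"
  unfolding has_parity_def
proof (intro allI impI)
  fix U
  assume ne: "coeff (a * b) U \<noteq> 0"
  then have "finite U"
    using ext_mult_infinite by force
  from ne have "(\<Sum>S\<in>Pow U. coeff a S * coeff b (U - S) * shuffle_sign S (U - S)) \<noteq> 0"
    by (auto simp: ext_mult_def)
  then obtain S where S: "S \<in> Pow U" "coeff a S * coeff b (U - S) * shuffle_sign S (U - S) \<noteq> 0"
    by (rule sum.not_neutral_contains_not_neutral)
  then have "coeff a S \<noteq> 0" "coeff b (U - S) \<noteq> 0"
    by (metis mult_zero_left mult_zero_right)+
  then have "card S mod 2 = p" "card (U - S) mod 2 = q"
    using a b unfolding has_parity_def by blast+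
  moreover have "card U = card S + card (U - S)"
    using \<open>finite U\<close> S(1) by (simp add: card_Diff_subset card_mono finite_subset)
  ultimately show "card U mod 2 = (p + q) mod 2"
    by (metis mod_add_eq)
qed

lemma has_parity_add: "has_parity p a \<Longrightarrow> has_parity p b \<Longrightarrow> has_parity p (a + b)"
  unfolding has_parity_def by (auto simp: ext_add_def) (metis add.right_neutral add_0)

lemma has_parity_uminus: "has_parity p a \<Longrightarrow> has_parity p (- a)"
  by (simp add: has_parity_def)

lemma has_parity_diff: "has_parity p a \<Longrightarrow> has_parity p b \<Longrightarrow> has_parity p (a - b)"
  by (metis diff_conv_add_uminus has_parity_add has_parity_uminus)

lemma has_parity_zero [simp]: "has_parity p 0"
  by (simp add: has_parity_def ext_zero_def)

lemma has_parity_sum: "(\<And>k. k \<in> I \<Longrightarrow> has_parity p (f k)) \<Longrightarrow> has_parity p (sum f I)"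
  by (induction I rule: infinite_finite_induct) (auto intro: has_parity_add)

lemma has_parity_scalar: "has_parity 0 (scalar c)"
  by (simp add: has_parity_def ext_scalar_def)

lemma has_parity_one: "has_parity 0 1"
  using has_parity_scalar[of 1] by simp

lemma has_parity_generator: "has_parity 1 (generator i j)"
  by (simp add: has_parity_def ext_gen_def)

section \<open>Square matrices over a ring\<close>

text \<open>An \<open>n \<times> n\<close> matrix is a function \<^typ>\<open>nat \<Rightarrow> nat \<Rightarrow> 'a\<close>; products and powers are
  zero outside the box \<open>{..<n} \<times> {..<n}\<close>.\<close>

type_synonym 'a sqmat = "nat \<Rightarrow> nat \<Rightarrow> 'a"

definition sq_mult :: "nat \<Rightarrow> 'a::semiring_0 sqmat \<Rightarrow> 'a sqmat \<Rightarrow> 'a sqmat" where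
  "sq_mult n A B = (\<lambda>i j. if i < n \<and> j < n then (\<Sum>k<n. A i k * B k j) else 0)"

definition sq_one :: "nat \<Rightarrow> 'a::semiring_1 sqmat" where
  "sq_one n = (\<lambda>i j. if i < n \<and> i = j then 1 else 0)"

primrec sq_pow :: "nat \<Rightarrow> 'a::semiring_1 sqmat \<Rightarrow> nat \<Rightarrow> 'a sqmat" where
  "sq_pow n A 0 = sq_one n"
| "sq_pow n A (Suc k) = sq_mult n (sq_pow n A k) A"

definition sq_trace :: "nat \<Rightarrow> 'a::comm_monoid_add sqmat \<Rightarrow> 'a" where
  "sq_trace n A = (\<Sum>i<n. A i i)"

definition sq_supported :: "nat \<Rightarrow> 'a::zero sqmat \<Rightarrow> bool" where
  "sq_supported n A \<longleftrightarrow> (\<forall>i j. \<not> (i < n \<and> j < n) \<longrightarrow> A i j = 0)"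

lemma sq_mult_assoc: "sq_mult n (sq_mult n A B) C = sq_mult n A (sq_mult n B C)"
proof (intro ext)
  fix i j
  show "sq_mult n (sq_mult n A B) C i j = sq_mult n A (sq_mult n B C) i j"
  proof (cases "i < n \<and> j < n")
    case True
    have "(\<Sum>k<n. (\<Sum>l<n. A i l * B l k) * C k j) = (\<Sum>l<n. A i l * (\<Sum>k<n. B l k * C k j))"
      by (simp add: sum_distrib_left sum_distrib_right mult.assoc) (rule sum.swap)
    with True show ?thesis
      by (simp add: sq_mult_def)
  next
    case False
    then show ?thesis
      by (simp only: sq_mult_def if_not_P[OF False] if_False)
  qed
qed

lemma sq_supported_sq_mult: "sq_supported n (sq_mult n A B)"
  by (simp add: sq_supported_def sq_mult_def)

lemma sq_supported_sq_one: "sq_supported n (sq_one n)"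
  by (simp add: sq_supported_def sq_one_def)

lemma sq_supported_sq_pow: "sq_supported n (sq_pow n A k)"
  by (cases k) (simp_all add: sq_supported_sq_one sq_supported_sq_mult)

lemma sq_mult_one_left_apply: "j < n \<Longrightarrow> sq_mult n (sq_one n) A i j = (if i < n then A i j else 0)"
  by (simp add: sq_mult_def sq_one_def if_distrib[of "\<lambda>x. x * _"] sum.delta cong: if_cong)

lemma sq_mult_one_right_apply: "i < n \<Longrightarrow> sq_mult n A (sq_one n) i j = (if j < n then A i j else 0)"
  by (simp add: sq_mult_def sq_one_def if_distrib[of "\<lambda>x. _ * x"] sum.delta' cong: if_cong)

lemma sq_mult_one_left:
  assumes "sq_supported n A"
  shows "sq_mult n (sq_one n) A = A"
proof (intro ext)
  fix i j
  show "sq_mult n (sq_one n) A i j = A i j"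
  proof (cases "j < n")
    case True
    then show ?thesis using assms by (simp add: sq_mult_one_left_apply sq_supported_def)
  next
    case False
    then show ?thesis using assms by (simp add: sq_mult_def sq_supported_def)
  qed
qed

lemma sq_mult_one_right:
  assumes "sq_supported n A"
  shows "sq_mult n A (sq_one n) = A"
proof (intro ext)
  fix i j
  show "sq_mult n A (sq_one n) i j = A i j"
  proof (cases "i < n")
    case True
    then show ?thesis using assms by (simp add: sq_mult_one_right_apply sq_supported_def)
  next
    case False
    then show ?thesis using assms by (simp add: sq_mult_def sq_supported_def)
  qed
qed

lemma sq_trace_one_mult: "sq_trace n (sq_mult n (sq_one n) A) = sq_trace n A"
  by (simp add: sq_trace_def sq_mult_one_left_apply)

lemma sq_pow_add: "sq_pow n A (k + l) = sq_mult n (sq_pow n A k) (sq_pow n A l)"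
  by (induction l) (simp_all add: sq_mult_one_right sq_supported_sq_pow sq_mult_assoc)

lemma sq_pow_Suc': "sq_supported n A \<Longrightarrow> sq_pow n A (Suc k) = sq_mult n A (sq_pow n A k)"
  using sq_pow_add[of n A 1 k] by (simp add: sq_mult_one_left)

lemma sq_pow_mult: "sq_pow n (sq_pow n A k) l = sq_pow n A (k * l)"
  by (induction l) (simp_all add: sq_pow_add[symmetric] add.commute)

lemma sq_pow_commute:
  assumes "sq_mult n A B = sq_mult n B A" "sq_supported n B"
  shows "sq_mult n (sq_pow n A k) B = sq_mult n B (sq_pow n A k)"
proof (induction k)
  case 0
  show ?case using assms(2) by (simp add: sq_mult_one_left sq_mult_one_right)
next
  case (Suc k)
  have "sq_mult n (sq_pow n A (Suc k)) B = sq_mult n (sq_mult n (sq_pow n A k) B) A"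
    by (simp add: sq_mult_assoc assms(1))
  also have "\<dots> = sq_mult n B (sq_pow n A (Suc k))"
    by (simp add: Suc sq_mult_assoc)
  finally show ?case .
qed

lemma sq_trace_mult: "sq_trace n (sq_mult n A B) = (\<Sum>i<n. \<Sum>k<n. A i k * B k i)"
  by (simp add: sq_trace_def sq_mult_def)

section \<open>Alternating trace sums\<close>

definition perm_trace :: "nat \<Rightarrow> nat \<Rightarrow> (nat \<Rightarrow> nat) \<Rightarrow> (nat \<Rightarrow> 'a::comm_ring_1 sqmat) \<Rightarrow> 'a" where
  "perm_trace n m \<sigma> F = (\<Sum>i\<in>{..<m} \<rightarrow>\<^sub>E {..<n}. \<Prod>k<m. F k (i k) (i (\<sigma> k)))"

definition alt_trace :: "nat \<Rightarrow> 'a::comm_ring_1 sqmat list \<Rightarrow> 'a" where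
  "alt_trace n As = (\<Sum>\<sigma>\<in>{\<sigma>. \<sigma> permutes {..<length As}}.
     of_int (sign \<sigma>) * perm_trace n (length As) \<sigma> (\<lambda>k. As ! k))"

lemma sum_PiE_lessThan_Suc:
  "(\<Sum>i\<in>{..<Suc m} \<rightarrow>\<^sub>E {..<n}. F i) = (\<Sum>j\<in>{..<m} \<rightarrow>\<^sub>E {..<n}. \<Sum>c<n. F (j(m := c)))"
proof -
  have "{..<Suc m} \<rightarrow>\<^sub>E {..<n} = (\<lambda>(y, g). g(m := y)) ` ({..<n} \<times> ({..<m} \<rightarrow>\<^sub>E {..<n}))"
    unfolding lessThan_Suc by (rule PiE_insert_eq)
  moreover have "inj_on (\<lambda>(y, g). g(m := y)) ({..<n} \<times> ({..<m} \<rightarrow>\<^sub>E {..<n}))"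
    by (rule inj_combinator) simp
  ultimately have "(\<Sum>i\<in>{..<Suc m} \<rightarrow>\<^sub>E {..<n}. F i) = (\<Sum>c<n. \<Sum>j\<in>{..<m} \<rightarrow>\<^sub>E {..<n}. F (j(m := c)))"
    by (simp add: sum.reindex sum.cartesian_product split_def)
  then show ?thesis
    by (simp add: sum.swap[of _ "{..<n}"])
qed

lemma restrict_comp_permutes_in_PiE:
  assumes "p permutes S" "i \<in> S \<rightarrow>\<^sub>E A"
  shows "restrict (i \<circ> p) S \<in> S \<rightarrow>\<^sub>E A"
  using assms permutes_in_image[OF assms(1)] by (auto simp: restrict_PiE_iff)

lemma restrict_comp_permutes_inv:
  assumes p: "p permutes S" and i: "i \<in> S \<rightarrow>\<^sub>E A"
  shows "restrict (restrict (i \<circ> p) S \<circ> inv p) S = i"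
proof
  fix k
  show "restrict (restrict (i \<circ> p) S \<circ> inv p) S k = i k"
    using PiE_arb[OF i, of k] permutes_in_image[OF permutes_inv[OF p], of k]
    by (auto simp: permutes_inverses[OF p])
qed

lemma sum_PiE_permutes_reindex:
  assumes p: "p permutes S"
  shows "(\<Sum>i\<in>S \<rightarrow>\<^sub>E A. G (restrict (i \<circ> p) S)) = (\<Sum>i\<in>S \<rightarrow>\<^sub>E A. G i)"
proof (rule sum.reindex_bij_witness[where i="\<lambda>i. restrict (i \<circ> inv p) S" and j="\<lambda>i. restrict (i \<circ> p) S"])
  have ip: "inv p permutes S" and iip: "inv (inv p) = p"
    using p by (simp_all add: permutes_inv permutes_inv_inv)
  fix i assume i: "i \<in> S \<rightarrow>\<^sub>E A"
  show "restrict (restrict (i \<circ> p) S \<circ> inv p) S = i"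
    using restrict_comp_permutes_inv[OF p i] .
  show "restrict (restrict (i \<circ> inv p) S \<circ> p) S = i"
    using restrict_comp_permutes_inv[OF ip i] by (simp add: iip)
  show "restrict (i \<circ> p) S \<in> S \<rightarrow>\<^sub>E A" "restrict (i \<circ> inv p) S \<in> S \<rightarrow>\<^sub>E A"
    using restrict_comp_permutes_in_PiE[OF p i] restrict_comp_permutes_in_PiE[OF ip i] .
qed simp

lemma perm_trace_conj:
  assumes p: "p permutes {..<m}" and s: "s permutes {..<m}"
  shows "perm_trace n m (inv p \<circ> s \<circ> p) (\<lambda>k. F (p k)) = perm_trace n m s F"
proof -
  let ?j = "\<lambda>i. restrict (i \<circ> inv p) {..<m}"
  have "(\<Prod>k<m. F (p k) (i k) (i (inv p (s (p k))))) = (\<Prod>k<m. F k (?j i k) (?j i (s k)))"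
    for i :: "nat \<Rightarrow> nat"
  proof -
    have "(\<Prod>k<m. F (p k) (i k) (i (inv p (s (p k))))) = (\<Prod>k<m. F k (i (inv p k)) (i (inv p (s k))))"
      using prod.reindex[of p "{..<m}" "\<lambda>k. F k (i (inv p k)) (i (inv p (s k)))"] permutes_inj_on[OF p]
      by (simp add: permutes_image[OF p] permutes_inverses[OF p])
    also have "\<dots> = (\<Prod>k<m. F k (?j i k) (?j i (s k)))"
      using permutes_in_image[OF s] by (intro prod.cong) auto
    finally show ?thesis .
  qed
  then have "perm_trace n m (inv p \<circ> s \<circ> p) (\<lambda>k. F (p k))
      = (\<Sum>i\<in>{..<m} \<rightarrow>\<^sub>E {..<n}. \<Prod>k<m. F k (?j i k) (?j i (s k)))"
    by (simp add: perm_trace_def)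
  also have "\<dots> = perm_trace n m s F"
    unfolding perm_trace_def
    by (rule sum_PiE_permutes_reindex[OF permutes_inv[OF p],
          where G="\<lambda>i. \<Prod>k<m. F k (i k) (i (s k))"])
  finally show ?thesis .
qed

lemma perm_trace_snoc_fixed:
  assumes q: "q permutes {..<length As}"
  shows "perm_trace n (Suc (length As)) q (\<lambda>k. (As @ [M]) ! k)
    = sq_trace n M * perm_trace n (length As) q (\<lambda>k. As ! k)"
proof -
  let ?m = "length As"
  have qm: "q ?m = ?m"
    using q by (simp add: permutes_not_in)
  have qk: "q k < ?m" if "k < ?m" for k
    using q that permutes_in_image by fastforce
  have "(\<Prod>k<Suc ?m. ((As @ [M]) ! k) ((j(?m := c)) k) ((j(?m := c)) (q k)))
      = (\<Prod>k<?m. (As ! k) (j k) (j (q k))) * M c c" for j c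
  proof -
    have "(\<Prod>k<?m. ((As @ [M]) ! k) ((j(?m := c)) k) ((j(?m := c)) (q k))) = (\<Prod>k<?m. (As ! k) (j k) (j (q k)))"
      by (intro prod.cong refl) (auto simp: nth_append dest: qk)
    then show ?thesis by (simp add: qm)
  qed
  then show ?thesis
    by (simp add: perm_trace_def sum_PiE_lessThan_Suc sq_trace_def sum_distrib_left
        sum_distrib_right mult.commute)
qed

lemma perm_trace_snoc_transpose_term:
  assumes q: "q permutes {..<length As}" and a: "a < length As"
    and j: "j \<in> {..<length As} \<rightarrow>\<^sub>E {..<n}"
  defines "s \<equiv> Transposition.transpose (length As) (q a) \<circ> q"
  shows "(\<Sum>c<n. \<Prod>k<Suc (length As). ((As @ [M]) ! k) ((j(length As := c)) k) ((j(length As := c)) (s k)))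
    = (\<Prod>k<length As. ((As[a := sq_mult n (As ! a) M]) ! k) (j k) (j (q k)))"
proof -
  let ?m = "length As" and ?As' = "As[a := sq_mult n (As ! a) M]"
  have qk: "q k < ?m" if "k < ?m" for k
    using q that permutes_in_image by fastforce
  have qa: "q a < ?m" "j a < n" "j (q a) < n"
    using j a qk[OF a] by auto
  have s_m: "s ?m = q a" and s_a: "s a = ?m"
    using q qa(1) by (auto simp: s_def permutes_not_in)
  have s_k: "s k = q k" if "k < ?m" "k \<noteq> a" for k
    using that qk[OF that(1)] permutes_inj[OF q] by (auto simp: s_def inj_eq)
  define R where "R = (\<Prod>k\<in>{..<?m} - {a}. (As ! k) (j k) (j (q k)))"
  have "(\<Prod>k<Suc ?m. ((As @ [M]) ! k) ((j(?m := c)) k) ((j(?m := c)) (s k)))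
      = (As ! a) (j a) c * M c (j (q a)) * R" for c
  proof -
    have "(\<Prod>k\<in>{..<?m} - {a}. ((As @ [M]) ! k) ((j(?m := c)) k) ((j(?m := c)) (s k))) = R"
      unfolding R_def by (intro prod.cong refl) (auto simp: nth_append s_k dest: qk)
    with a s_m s_a qa(1) show ?thesis
      by (simp add: prod.remove[of "{..<?m}" a] nth_append ac_simps)
  qed
  then have "(\<Sum>c<n. \<Prod>k<Suc ?m. ((As @ [M]) ! k) ((j(?m := c)) k) ((j(?m := c)) (s k)))
      = sq_mult n (As ! a) M (j a) (j (q a)) * R"
    using qa by (simp add: sq_mult_def sum_distrib_right)
  also have "\<dots> = (\<Prod>k<?m. (?As' ! k) (j k) (j (q k)))"
  proof -
    have "R = (\<Prod>k\<in>{..<?m} - {a}. (?As' ! k) (j k) (j (q k)))"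
      unfolding R_def by (intro prod.cong) auto
    with a show ?thesis
      by (simp add: prod.remove[of "{..<?m}" a])
  qed
  finally show ?thesis .
qed

lemma perm_trace_snoc_transpose:
  assumes q: "q permutes {..<length As}" and a: "a < length As"
  shows "perm_trace n (Suc (length As)) (Transposition.transpose (length As) (q a) \<circ> q) (\<lambda>k. (As @ [M]) ! k)
    = perm_trace n (length As) q (\<lambda>k. (As[a := sq_mult n (As ! a) M]) ! k)"
  unfolding perm_trace_def sum_PiE_lessThan_Suc
  by (intro sum.cong refl perm_trace_snoc_transpose_term[OF q a])

lemma sum_perm_trace_snoc_transpose:
  fixes As :: "'a::comm_ring_1 sqmat list"
  assumes q: "q permutes {..<length As}"
  shows "(\<Sum>b<length As. of_int (sign (Transposition.transpose (length As) b \<circ> q))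
      * perm_trace n (Suc (length As)) (Transposition.transpose (length As) b \<circ> q) (\<lambda>k. (As @ [M]) ! k))
    = - (\<Sum>a<length As. of_int (sign q) * perm_trace n (length As) q (\<lambda>k. (As[a := sq_mult n (As ! a) M]) ! k))"
proof -
  let ?m = "length As" and ?t = "Transposition.transpose (length As)"
  have "(\<Sum>b<?m. of_int (sign (?t b \<circ> q)) * perm_trace n (Suc ?m) (?t b \<circ> q) (\<lambda>k. (As @ [M]) ! k))
      = (\<Sum>a<?m. of_int (sign (?t (q a) \<circ> q)) * perm_trace n (Suc ?m) (?t (q a) \<circ> q) (\<lambda>k. (As @ [M]) ! k))"
    by (rule sum.reindex_cong[OF permutes_inj_on[OF q] permutes_image[OF q, symmetric]]) simp
  also have "\<dots> = (\<Sum>a<?m. - (of_int (sign q) * perm_trace n ?m q (\<lambda>k. (As[a := sq_mult n (As ! a) M]) ! k)))"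
  proof (intro sum.cong refl)
    fix a assume "a \<in> {..<?m}"
    moreover from this have "sign (?t (q a) \<circ> q) = - sign q"
      using q permutes_in_image[OF q, of a] permutation_permutes[of q]
      by (auto simp: sign_compose permutation_swap_id sign_swap_id)
    ultimately show "of_int (sign (?t (q a) \<circ> q)) * perm_trace n (Suc ?m) (?t (q a) \<circ> q) (\<lambda>k. (As @ [M]) ! k)
        = - (of_int (sign q) * perm_trace n ?m q (\<lambda>k. (As[a := sq_mult n (As ! a) M]) ! k))"
      using perm_trace_snoc_transpose[OF q] by simp
  qed
  finally show ?thesis
    by (simp add: sum_negf)
qed

text \<open>Sort the permutations of \<open>{..m}\<close> by the image of \<open>m\<close>: those fixing \<open>m\<close> contribute
  \<open>tr M\<close> times the shorter sum, and composing \<open>q\<close> with the transposition of \<open>m\<close> and \<open>q a\<close>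
  merges the factors \<open>A\<^sub>a\<close> and \<open>M\<close> into \<open>A\<^sub>a M\<close> at the cost of a sign.\<close>

lemma alt_trace_snoc:
  fixes As :: "'a::comm_ring_1 sqmat list"
  shows "alt_trace n (As @ [M])
    = sq_trace n M * alt_trace n As - (\<Sum>a<length As. alt_trace n (As[a := sq_mult n (As ! a) M]))"
proof -
  let ?m = "length As" and ?t = "Transposition.transpose (length As)"
  let ?f = "\<lambda>\<sigma>. of_int (sign \<sigma>) * perm_trace n (Suc ?m) \<sigma> (\<lambda>k. (As @ [M]) ! k) :: 'a"
  let ?P = "{q. q permutes {..<?m}}"
  have "alt_trace n (As @ [M]) = sum ?f {\<sigma>. \<sigma> permutes insert ?m {..<?m}}"
    by (simp add: alt_trace_def lessThan_Suc)
  also have "\<dots> = (\<Sum>b\<in>insert ?m {..<?m}. \<Sum>q\<in>?P. ?f (?t b \<circ> q))"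
    by (rule sum_over_permutations_insert) auto
  also have "\<dots> = (\<Sum>q\<in>?P. ?f q) + (\<Sum>q\<in>?P. \<Sum>b<?m. ?f (?t b \<circ> q))"
    by (simp add: sum.swap[of _ "{..<?m}"])
  also have "(\<Sum>q\<in>?P. ?f q) = sq_trace n M * alt_trace n As"
    by (simp add: alt_trace_def sum_distrib_left perm_trace_snoc_fixed mult.left_commute)
  also have "(\<Sum>q\<in>?P. \<Sum>b<?m. ?f (?t b \<circ> q)) = - (\<Sum>a<?m. alt_trace n (As[a := sq_mult n (As ! a) M]))"
    by (simp add: sum_perm_trace_snoc_transpose alt_trace_def sum_negf sum.swap[of _ "{..<?m}"])
  finally show ?thesis
    by simp
qed

lemma alt_trace_Nil: "alt_trace n [] = 1"
  by (simp add: alt_trace_def perm_trace_def)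

lemma alt_trace_single: "alt_trace n [M] = sq_trace n M"
  using alt_trace_snoc[of n "[]" M] by (simp add: alt_trace_Nil)

lemma alt_trace_permute:
  fixes As :: "'a::comm_ring_1 sqmat list"
  assumes p: "p permutes {..<length As}"
  shows "alt_trace n (map (\<lambda>k. As ! p k) [0..<length As]) = alt_trace n As"
proof -
  let ?m = "length As" and ?P = "{\<sigma>. \<sigma> permutes {..<length As}}"
  have ip: "inv p permutes {..<?m}"
    using p by (rule permutes_inv)
  have "alt_trace n (map (\<lambda>k. As ! p k) [0..<?m])
      = (\<Sum>\<sigma>\<in>?P. of_int (sign \<sigma>) * perm_trace n ?m \<sigma> (\<lambda>k. As ! p k))"
    unfolding alt_trace_def by (intro sum.cong) (auto simp: perm_trace_def)
  also have "\<dots> = (\<Sum>\<sigma>\<in>?P. of_int (sign \<sigma>) * perm_trace n ?m \<sigma> (\<lambda>k. As ! k))"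
  proof (rule sum.reindex_bij_witness[where i="\<lambda>s. inv p \<circ> s \<circ> p" and j="\<lambda>s. p \<circ> s \<circ> inv p"])
    fix s assume "s \<in> ?P"
    then have s: "s permutes {..<?m}" by simp
    show conj_inv: "inv p \<circ> (p \<circ> s \<circ> inv p) \<circ> p = s" and "p \<circ> (inv p \<circ> s \<circ> p) \<circ> inv p = s"
      using p by (simp_all add: fun_eq_iff permutes_inverses)
    have conj: "p \<circ> s \<circ> inv p permutes {..<?m}" "inv p \<circ> s \<circ> p permutes {..<?m}"
      using s p ip by (meson permutes_compose)+
    then show "p \<circ> s \<circ> inv p \<in> ?P" "inv p \<circ> s \<circ> p \<in> ?P"
      by simp_all
    have "permutation p" "permutation (inv p)" "permutation s"
      using p ip s by (auto simp: permutation_permutes)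
    then have "sign (p \<circ> s \<circ> inv p) = sign s"
      by (simp add: sign_compose permutation_compose sign_inverse)
    moreover have "perm_trace n ?m s (\<lambda>k. As ! p k) = perm_trace n ?m (p \<circ> s \<circ> inv p) (\<lambda>k. As ! k)"
      using perm_trace_conj[OF p conj(1), of n "\<lambda>k. As ! k"] by (simp only: conj_inv)
    ultimately show "of_int (sign (p \<circ> s \<circ> inv p)) * perm_trace n ?m (p \<circ> s \<circ> inv p) (\<lambda>k. As ! k)
        = of_int (sign s) * perm_trace n ?m s (\<lambda>k. As ! p k)"
      by simp
  qed
  also have "\<dots> = alt_trace n As"
    by (simp add: alt_trace_def)
  finally show ?thesis .
qed

lemma alt_trace_swap:
  fixes As :: "'a::comm_ring_1 sqmat list"
  assumes "a < length As" "b < length As"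
  shows "alt_trace n (As[a := As ! b, b := As ! a]) = alt_trace n As"
proof -
  have "map (\<lambda>k. As ! Transposition.transpose a b k) [0..<length As] = As[a := As ! b, b := As ! a]"
    by (rule nth_equalityI) (auto simp: nth_list_update transpose_def)
  with alt_trace_permute[of "Transposition.transpose a b" As n] assms show ?thesis
    by (simp add: permutes_swap_id)
qed

lemma alt_trace_replicate_update:
  assumes "a < Suc r"
  shows "alt_trace n ((replicate (Suc r) Y)[a := W] @ T) = alt_trace n (replicate r Y @ W # T)"
proof -
  let ?L = "(replicate (Suc r) Y)[a := W] @ T"
  have "?L[a := ?L ! r, r := ?L ! a] = replicate r Y @ W # T"
    using assms by (intro nth_equalityI) (auto simp: nth_list_update nth_append simp del: replicate.simps)
  moreover have "a < length ?L" "r < length ?L"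
    using assms by (simp_all del: replicate.simps)
  ultimately show ?thesis
    using alt_trace_swap[of a ?L r n] by (simp del: replicate.simps)
qed

lemma alt_trace_swap_last: "alt_trace n (As @ [M, N]) = alt_trace n (As @ [N, M])"
proof -
  let ?L = "As @ [M, N]"
  have "?L[length As := ?L ! Suc (length As), Suc (length As) := ?L ! length As] = As @ [N, M]"
    by (intro nth_equalityI) (auto simp: nth_list_update nth_append)
  with alt_trace_swap[of "length As" ?L "Suc (length As)" n] show ?thesis
    by simp
qed

lemma sum_permutes_sign_eq_0:
  fixes g :: "(nat \<Rightarrow> nat) \<Rightarrow> 'a::comm_ring_1"
  assumes P: "finite P" and pq: "p \<in> P" "q \<in> P" "p \<noteq> q"
    and invariant: "\<And>\<sigma>. \<sigma> permutes P \<Longrightarrow> g (Transposition.transpose p q \<circ> \<sigma>) = g \<sigma>"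
  shows "(\<Sum>\<sigma>\<in>{\<sigma>. \<sigma> permutes P}. of_int (sign \<sigma>) * g \<sigma>) = 0"
proof -
  let ?t = "Transposition.transpose p q"
  let ?A = "{\<sigma>. \<sigma> permutes P \<and> evenperm \<sigma>}" and ?B = "{\<sigma>. \<sigma> permutes P \<and> \<not> evenperm \<sigma>}"
  have odd_t: "evenperm (?t \<circ> \<sigma>) \<longleftrightarrow> \<not> evenperm \<sigma>" if "\<sigma> permutes P" for \<sigma>
    using that P pq(3) evenperm_comp[OF permutation_swap_id, of \<sigma> p q] evenperm_swap[of p q]
    by (auto simp: permutation_permutes)
  have split: "{\<sigma>. \<sigma> permutes P} = ?A \<union> ?B"
    by blast
  have "(\<Sum>\<sigma>\<in>{\<sigma>. \<sigma> permutes P}. of_int (sign \<sigma>) * g \<sigma>)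
      = (\<Sum>\<sigma>\<in>?A. of_int (sign \<sigma>) * g \<sigma>) + (\<Sum>\<sigma>\<in>?B. of_int (sign \<sigma>) * g \<sigma>)"
    by (subst split, rule sum.union_disjoint) (use finite_permutations[OF P] in auto)
  also have "(\<Sum>\<sigma>\<in>?B. of_int (sign \<sigma>) * g \<sigma>) = (\<Sum>\<sigma>\<in>?A. - (of_int (sign \<sigma>) * g \<sigma>))"
  proof (rule sum.reindex_bij_witness[where i="\<lambda>\<sigma>. ?t \<circ> \<sigma>" and j="\<lambda>\<sigma>. ?t \<circ> \<sigma>"])
    have tP: "?t permutes P"
      by (rule permutes_swap_id[OF pq(1,2)])
    show "?t \<circ> \<sigma> \<in> ?A" if "\<sigma> \<in> ?B" for \<sigma>
      using that odd_t tP permutes_compose by blast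
    show "?t \<circ> \<sigma> \<in> ?B" if "\<sigma> \<in> ?A" for \<sigma>
      using that odd_t tP permutes_compose by blast
    show "- (of_int (sign (?t \<circ> \<sigma>)) * g (?t \<circ> \<sigma>)) = of_int (sign \<sigma>) * g \<sigma>" if "\<sigma> \<in> ?B" for \<sigma>
      using that odd_t[of \<sigma>] invariant[of \<sigma>] by (simp add: sign_def)
  qed (simp_all add: comp_assoc[symmetric])
  finally show ?thesis
    by (simp add: sum_negf)
qed

text \<open>Pigeonhole: an index map \<open>i : {..<m} \<rightarrow> {..<n}\<close> with \<open>n < m\<close> identifies two
  positions, and the transposition of these cancels its contributions in pairs.\<close>

lemma sum_permutes_PiE_eq_0:
  fixes h :: "(nat \<Rightarrow> nat) \<Rightarrow> (nat \<Rightarrow> nat) \<Rightarrow> 'a::comm_ring_1"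
  assumes "n < m"
  shows "(\<Sum>\<sigma>\<in>{\<sigma>. \<sigma> permutes {..<m}}. \<Sum>i\<in>{..<m} \<rightarrow>\<^sub>E {..<n}. of_int (sign \<sigma>) * h i (i \<circ> \<sigma>)) = 0"
proof -
  have vanish: "(\<Sum>\<sigma>\<in>{\<sigma>. \<sigma> permutes {..<m}}. of_int (sign \<sigma>) * h i (i \<circ> \<sigma>)) = 0"
    if i: "i \<in> {..<m} \<rightarrow>\<^sub>E {..<n}" for i
  proof -
    have "\<not> inj_on i {..<m}"
    proof
      assume "inj_on i {..<m}"
      moreover have "i ` {..<m} \<subseteq> {..<n}"
        using i by auto
      ultimately show False
        using card_inj_on_le[of i "{..<m}" "{..<n}"] assms by simp
    qed
    then obtain p q where pq: "p \<in> {..<m}" "q \<in> {..<m}" "p \<noteq> q" "i p = i q"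
      unfolding inj_on_def by blast
    have i_t: "i \<circ> Transposition.transpose p q = i"
    proof
      fix x
      show "(i \<circ> Transposition.transpose p q) x = i x"
        using pq(4) by (cases "x = p"; cases "x = q") auto
    qed
    show ?thesis
    proof (rule sum_permutes_sign_eq_0[OF _ pq(1-3)])
      show "h i (i \<circ> (Transposition.transpose p q \<circ> \<sigma>)) = h i (i \<circ> \<sigma>)" for \<sigma>
        by (simp add: comp_assoc[symmetric] i_t)
    qed simp
  qed
  have "(\<Sum>\<sigma>\<in>{\<sigma>. \<sigma> permutes {..<m}}. \<Sum>i\<in>{..<m} \<rightarrow>\<^sub>E {..<n}. of_int (sign \<sigma>) * h i (i \<circ> \<sigma>))
      = (\<Sum>i\<in>{..<m} \<rightarrow>\<^sub>E {..<n}. \<Sum>\<sigma>\<in>{\<sigma>. \<sigma> permutes {..<m}}. of_int (sign \<sigma>) * h i (i \<circ> \<sigma>))"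
    by (rule sum.swap)
  also have "\<dots> = 0"
    using vanish by (intro sum.neutral) blast
  finally show ?thesis .
qed

lemma alt_trace_eq_0:
  fixes As :: "'a::comm_ring_1 sqmat list"
  assumes "n < length As"
  shows "alt_trace n As = 0"
proof -
  have "alt_trace n As = (\<Sum>\<sigma>\<in>{\<sigma>. \<sigma> permutes {..<length As}}. \<Sum>i\<in>{..<length As} \<rightarrow>\<^sub>E {..<n}.
      of_int (sign \<sigma>) * (\<lambda>i j. \<Prod>k<length As. (As ! k) (i k) (j k)) i (i \<circ> \<sigma>))"
    by (simp add: alt_trace_def perm_trace_def sum_distrib_left)
  also have "\<dots> = 0"
    by (rule sum_permutes_PiE_eq_0[OF assms])
  finally show ?thesis .
qed

section \<open>Alternating traces with a matrix whose powers are traceless\<close>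

lemma alt_trace_pair: "alt_trace n [M, N] = sq_trace n N * sq_trace n M - sq_trace n (sq_mult n M N)"
  using alt_trace_snoc[of n "[M]" N] by (simp add: alt_trace_single)

locale traceless_powers =
  fixes n :: nat and Y :: "'a::comm_ring_1 sqmat"
  assumes supported: "sq_supported n Y"
    and trace_pow: "\<And>k. k \<ge> 1 \<Longrightarrow> sq_trace n (sq_pow n Y k) = 0"
begin

abbreviation alt_Y :: "nat \<Rightarrow> 'a sqmat list \<Rightarrow> 'a" where
  "alt_Y r Ms \<equiv> alt_trace n (replicate r Y @ Ms)"

lemma alt_Y_single_Suc:
  "alt_Y (Suc r) [M] = sq_trace n M * alt_Y r [Y] - of_nat (Suc r) * alt_Y r [sq_mult n Y M]"
proof -
  let ?Ys = "replicate (Suc r) Y"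
  have "alt_trace n (?Ys[a := sq_mult n (?Ys ! a) M]) = alt_Y r [sq_mult n Y M]" if "a < Suc r" for a
    using alt_trace_replicate_update[OF that, of n Y "sq_mult n Y M" "[]"] that
    by (simp del: replicate.simps)
  moreover have "alt_trace n ?Ys = alt_Y r [Y]"
    by (simp add: replicate_append_same[symmetric])
  ultimately show ?thesis
    using alt_trace_snoc[of n ?Ys M] by simp
qed

lemma alt_Y_single_pow: "j \<ge> 1 \<Longrightarrow> alt_Y r [sq_pow n Y j] = 0"
proof (induction r arbitrary: j)
  case 0
  then show ?case by (simp add: alt_trace_single trace_pow)
next
  case (Suc r)
  have "alt_Y r [Y] = 0"
    using Suc.IH[of 1] by (simp add: sq_mult_one_left supported)
  moreover have "alt_Y r [sq_pow n Y (Suc j)] = 0"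
    by (rule Suc.IH) simp
  ultimately show ?case
    by (simp add: alt_Y_single_Suc sq_pow_Suc'[OF supported] del: replicate.simps sq_pow.simps)
qed

lemma alt_Y_single: "alt_Y r [M] = (-1) ^ r * of_nat (fact r) * sq_trace n (sq_mult n (sq_pow n Y r) M)"
proof (induction r arbitrary: M)
  case 0
  then show ?case by (simp add: alt_trace_single sq_trace_one_mult)
next
  case (Suc r)
  have "alt_Y r [Y] = 0"
    using alt_Y_single_pow[of 1 r] by (simp add: sq_mult_one_left supported)
  then have "alt_Y (Suc r) [M] = - (of_nat (Suc r) * alt_Y r [sq_mult n Y M])"
    by (simp add: alt_Y_single_Suc del: replicate.simps)
  also have "\<dots> = (-1) ^ Suc r * of_nat (fact (Suc r)) * sq_trace n (sq_mult n (sq_pow n Y (Suc r)) M)"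
    by (simp add: Suc.IH sq_mult_assoc sq_pow_Suc' supported algebra_simps)
  finally show ?case .
qed

lemma alt_Y_pair_Suc:
  "alt_Y (Suc r) [M, N] = sq_trace n N * alt_Y (Suc r) [M]
     - of_nat (Suc r) * alt_Y r [M, sq_mult n Y N] - alt_Y (Suc r) [sq_mult n M N]"
proof -
  let ?As = "replicate (Suc r) Y @ [M]"
  have "alt_trace n (?As[a := sq_mult n (?As ! a) N]) = alt_Y r [M, sq_mult n Y N]" if "a < Suc r" for a
  proof -
    have "?As[a := sq_mult n (?As ! a) N] = (replicate (Suc r) Y)[a := sq_mult n Y N] @ [M]"
      using that by (simp add: nth_append list_update_append del: replicate.simps)
    then show ?thesis
      using that alt_trace_replicate_update[OF that, of n Y "sq_mult n Y N" "[M]"]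
        alt_trace_swap_last[of n "replicate r Y" "sq_mult n Y N" M]
      by simp
  qed
  moreover have "alt_trace n (?As[Suc r := sq_mult n (?As ! Suc r) N]) = alt_Y (Suc r) [sq_mult n M N]"
    by (simp add: nth_append list_update_append del: replicate.simps)
  ultimately show ?thesis
    using alt_trace_snoc[of n ?As N] by (simp add: algebra_simps del: replicate.simps)
qed

lemma alt_Y_pair:
  assumes commute: "sq_mult n Y Z = sq_mult n Z Y" and supported_Z: "sq_supported n Z"
  shows "alt_Y r [Z, N] = (-1) ^ r * of_nat (fact r) *
    ((\<Sum>s\<le>r. sq_trace n (sq_mult n (sq_pow n Y s) N) * sq_trace n (sq_mult n (sq_pow n Y (r - s)) Z))
      - of_nat (Suc r) * sq_trace n (sq_mult n (sq_mult n Z (sq_pow n Y r)) N))"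
proof (induction r arbitrary: N)
  case 0
  then show ?case
    by (simp add: alt_trace_pair sq_trace_one_mult sq_mult_one_right supported_Z algebra_simps)
next
  case (Suc r)
  define a where "a s = sq_trace n (sq_mult n (sq_pow n Y s) N)" for s
  define b where "b s = sq_trace n (sq_mult n (sq_pow n Y s) Z)" for s
  define c where "c s = sq_trace n (sq_mult n (sq_mult n Z (sq_pow n Y s)) N)" for s
  define e :: 'a where "e = (-1) ^ r * of_nat (fact r)"
  have IH: "alt_Y r [Z, sq_mult n Y N] = e * ((\<Sum>s\<le>r. a (Suc s) * b (r - s)) - of_nat (Suc r) * c (Suc r))"
    unfolding Suc.IH a_def b_def c_def e_def by (simp add: sq_mult_assoc)
  have single_Z: "alt_Y (Suc r) [Z] = - e * of_nat (Suc r) * b (Suc r)"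
    by (simp add: alt_Y_single b_def e_def algebra_simps del: sq_pow.simps replicate.simps)
  have "sq_mult n (sq_pow n Y (Suc r)) (sq_mult n Z N) = sq_mult n (sq_mult n Z (sq_pow n Y (Suc r))) N"
    by (simp only: sq_mult_assoc[symmetric] sq_pow_commute[OF commute supported_Z])
  then have single_ZN: "alt_Y (Suc r) [sq_mult n Z N] = - e * of_nat (Suc r) * c (Suc r)"
    by (simp add: alt_Y_single c_def e_def algebra_simps del: sq_pow.simps replicate.simps)
  define S where "S = (\<Sum>s\<le>r. a (Suc s) * b (r - s))"
  have "(\<Sum>s\<le>Suc r. a s * b (Suc r - s)) = sq_trace n N * b (Suc r) + S"
    unfolding S_def
    by (subst sum.atMost_Suc_shift) (simp add: a_def sq_trace_one_mult del: sum.atMost_Suc)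
  moreover have "alt_Y (Suc r) [Z, N] = sq_trace n N * (- e * of_nat (Suc r) * b (Suc r))
      - of_nat (Suc r) * (e * (S - of_nat (Suc r) * c (Suc r))) - (- e * of_nat (Suc r) * c (Suc r))"
    by (simp only: alt_Y_pair_Suc single_Z single_ZN IH S_def)
  moreover have "\<dots> = (-1) ^ Suc r * of_nat (fact (Suc r))
      * ((sq_trace n N * b (Suc r) + S) - of_nat (Suc (Suc r)) * c (Suc r))"
    by (simp add: e_def algebra_simps)
  ultimately show ?case
    by (simp add: a_def b_def c_def del: sum.atMost_Suc)
qed

end

section \<open>The even subalgebra\<close>

typedef even_exterior = "{a :: exterior. has_parity 0 a}" morphisms of_even Abs_even
  by (rule exI[of _ 0]) simp

lemma has_parity_of_even: "has_parity 0 (of_even x)"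
  using of_even[of x] by simp

lemma of_even_eqI: "of_even x = of_even y \<Longrightarrow> x = y"
  by (simp add: of_even_inject)

lemma of_even_Abs_even: "has_parity 0 a \<Longrightarrow> of_even (Abs_even a) = a"
  by (simp add: Abs_even_inverse)

instantiation even_exterior :: comm_ring_1
begin

definition "0 = Abs_even 0"
definition "1 = Abs_even 1"
definition "x + y = Abs_even (of_even x + of_even y)"
definition "- x = Abs_even (- of_even x)"
definition "x - y = Abs_even (of_even x - of_even y)"
definition "x * y = Abs_even (of_even x * of_even y)"

lemma of_even_zero [simp]: "of_even 0 = 0"
  by (simp add: zero_even_exterior_def of_even_Abs_even)

lemma of_even_one [simp]: "of_even 1 = 1"
  by (simp add: one_even_exterior_def of_even_Abs_even has_parity_one)

lemma of_even_add [simp]: "of_even (x + y) = of_even x + of_even y"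
  by (simp add: plus_even_exterior_def of_even_Abs_even has_parity_add has_parity_of_even)

lemma of_even_uminus [simp]: "of_even (- x) = - of_even x"
  by (simp add: uminus_even_exterior_def of_even_Abs_even has_parity_uminus has_parity_of_even)

lemma of_even_diff [simp]: "of_even (x - y) = of_even x - of_even y"
  by (simp add: minus_even_exterior_def of_even_Abs_even has_parity_diff has_parity_of_even)

lemma of_even_mult [simp]: "of_even (x * y) = of_even x * of_even y"
  using has_parity_mult[OF has_parity_of_even has_parity_of_even, of x y]
  by (simp add: times_even_exterior_def of_even_Abs_even)

instance
proof
  fix a b c :: even_exterior
  show "a * b * c = a * (b * c)" "(a + b) * c = a * c + b * c" "a + b + c = a + (b + c)"
    by (rule of_even_eqI; simp add: mult.assoc distrib_right add.assoc)+
  show "a * b = b * a"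
    using even_commute[OF has_parity_of_even[of a], of "of_even b"] by (intro of_even_eqI) simp
  show "1 * a = a" "0 + a = a" "- a + a = 0" "a - b = a + - b" "a + b = b + a"
    by (rule of_even_eqI; simp add: add.commute)+
  show "(0 :: even_exterior) \<noteq> 1"
    by (metis of_even_one of_even_zero zero_neq_one)
qed

end

lemma of_even_sum: "of_even (sum f I) = (\<Sum>i\<in>I. of_even (f i))"
  by (induction I rule: infinite_finite_induct) simp_all

lemma of_even_of_nat: "of_even (of_nat k) = of_nat k"
  by (induction k) simp_all

lemma of_even_power: "of_even (x ^ k) = of_even x ^ k"
  by (induction k) simp_all

definition of_even_mat :: "even_exterior sqmat \<Rightarrow> exterior sqmat" where
  "of_even_mat A = (\<lambda>i j. of_even (A i j))"

definition to_even_mat :: "exterior sqmat \<Rightarrow> even_exterior sqmat" where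
  "to_even_mat A = (\<lambda>i j. Abs_even (A i j))"

lemma of_even_mat_to_even_mat: "(\<And>i j. has_parity 0 (A i j)) \<Longrightarrow> of_even_mat (to_even_mat A) = A"
  by (simp add: of_even_mat_def to_even_mat_def of_even_Abs_even)

lemma of_even_mat_inject: "of_even_mat A = of_even_mat B \<Longrightarrow> A = B"
  by (simp add: of_even_mat_def fun_eq_iff of_even_inject)

lemma of_even_mat_sq_mult: "of_even_mat (sq_mult n A B) = sq_mult n (of_even_mat A) (of_even_mat B)"
  by (simp add: of_even_mat_def sq_mult_def fun_eq_iff of_even_sum)

lemma of_even_mat_sq_pow: "of_even_mat (sq_pow n A k) = sq_pow n (of_even_mat A) k"
proof (induction k)
  case 0
  then show ?case by (simp add: of_even_mat_def sq_one_def fun_eq_iff)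
qed (simp add: of_even_mat_sq_mult)

lemma of_even_sq_trace: "of_even (sq_trace n A) = sq_trace n (of_even_mat A)"
  by (simp add: sq_trace_def of_even_mat_def of_even_sum)

lemma sq_supported_to_even_mat: "sq_supported n A \<Longrightarrow> sq_supported n (to_even_mat A)"
  by (simp add: sq_supported_def to_even_mat_def zero_even_exterior_def)

definition gen_mat :: "nat \<Rightarrow> exterior sqmat" where
  "gen_mat n = (\<lambda>i j. if i < n \<and> j < n then generator i j else 0)"

lemma sq_supported_gen_mat: "sq_supported n (gen_mat n)"
  by (simp add: sq_supported_def gen_mat_def)

lemma has_parity_gen_mat: "has_parity 1 (gen_mat n i j)"
  using has_parity_generator[of i j] by (simp add: gen_mat_def)

lemma has_parity_sq_mult:
  assumes "\<And>i j. has_parity p (A i j)" "\<And>i j. has_parity q (B i j)"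
  shows "has_parity ((p + q) mod 2) (sq_mult n A B i j)"
  by (simp add: sq_mult_def assms has_parity_mult has_parity_sum)

lemma has_parity_gen_pow: "has_parity (k mod 2) (sq_pow n (gen_mat n) k i j)"
proof (induction k arbitrary: i j)
  case 0
  then show ?case by (simp add: sq_one_def has_parity_one)
next
  case (Suc k)
  have "has_parity ((k mod 2 + 1) mod 2) (sq_mult n (sq_pow n (gen_mat n) k) (gen_mat n) i j)"
    by (rule has_parity_sq_mult) (rule Suc.IH, rule has_parity_gen_mat)
  moreover have "(k mod 2 + 1) mod 2 = Suc k mod 2"
    by presburger
  ultimately show ?case
    by simp
qed

lemma exterior_double_eq_0: "(t :: exterior) + t = 0 \<Longrightarrow> t = 0"
proof -
  assume "t + t = 0"
  then have "scalar (1/2) * (t + t) = 0" by simp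
  moreover have "scalar (1/2) * (t + t) = (scalar (1/2) + scalar (1/2)) * t"
    by (simp add: algebra_simps)
  ultimately show "t = 0"
    by (simp flip: scalar_add)
qed

text \<open>The entries of \<open>X\<close> anticommute, so cycling one factor of \<open>X\<close> round the trace of an
  odd power gives \<open>tr X\<^sup>2\<^sup>k = - tr X\<^sup>2\<^sup>k\<close>.\<close>

lemma sq_trace_gen_pow_even: "k \<ge> 1 \<Longrightarrow> sq_trace n (sq_pow n (gen_mat n) (2 * k)) = 0"
proof -
  assume "k \<ge> 1"
  define m where "m = 2 * k - 1"
  have m: "2 * k = Suc m" and "odd m"
    using \<open>k \<ge> 1\<close> unfolding m_def by presburger+
  let ?A = "sq_pow n (gen_mat n) m" and ?X = "gen_mat n"
  have odd_A: "has_parity 1 (?A i l)" for i l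
    using has_parity_gen_pow[of m n i l] \<open>odd m\<close> by (simp add: odd_iff_mod_2_eq_one)
  have "sq_trace n (sq_pow n ?X (2 * k)) = (\<Sum>i<n. \<Sum>l<n. ?A i l * ?X l i)"
    by (simp add: m sq_trace_mult)
  also have "\<dots> = (\<Sum>i<n. \<Sum>l<n. - (?X l i * ?A i l))"
    by (intro sum.cong refl odd_anticommute[OF odd_A has_parity_gen_mat])
  also have "\<dots> = - (\<Sum>l<n. \<Sum>i<n. ?X l i * ?A i l)"
    by (subst sum.swap) (simp add: sum_negf)
  also have "\<dots> = - sq_trace n (sq_pow n ?X (2 * k))"
    by (simp only: m sq_pow_Suc'[OF sq_supported_gen_mat] sq_trace_mult)
  finally have "sq_trace n (sq_pow n ?X (2 * k)) + sq_trace n (sq_pow n ?X (2 * k)) = 0"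
    by (simp add: eq_neg_iff_add_eq_0)
  then show ?thesis
    by (rule exterior_double_eq_0)
qed

section \<open>Cancelling an extra generator\<close>

definition supported_in :: "nat \<Rightarrow> exterior \<Rightarrow> bool" where
  "supported_in n a \<longleftrightarrow> (\<forall>S. coeff a S \<noteq> 0 \<longrightarrow> S \<subseteq> {..<n} \<times> {..<n})"

lemma supported_in_add:
  assumes "supported_in n a" "supported_in n b"
  shows "supported_in n (a + b)"
  unfolding supported_in_def
proof (intro allI impI)
  fix S
  assume "coeff (a + b) S \<noteq> 0"
  then have "coeff a S \<noteq> 0 \<or> coeff b S \<noteq> 0"
    by (auto simp: ext_add_def)
  then show "S \<subseteq> {..<n} \<times> {..<n}"
    using assms unfolding supported_in_def by blast
qed

lemma supported_in_diff: "supported_in n a \<Longrightarrow> supported_in n b \<Longrightarrow> supported_in n (a - b)"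
  using supported_in_add[of n a "- b"] by (simp add: supported_in_def)

lemma supported_in_zero: "supported_in n 0"
  by (simp add: supported_in_def ext_zero_def)

lemma supported_in_scalar: "supported_in n (scalar c)"
  by (simp add: supported_in_def ext_scalar_def)

lemma supported_in_sum: "(\<And>k. k \<in> I \<Longrightarrow> supported_in n (f k)) \<Longrightarrow> supported_in n (sum f I)"
  by (induction I rule: infinite_finite_induct) (auto intro: supported_in_add supported_in_zero)

lemma supported_in_mult:
  assumes a: "supported_in n a" and b: "supported_in n b"
  shows "supported_in n (a * b)"
  unfolding supported_in_def
proof (intro allI impI)
  fix U
  assume "coeff (a * b) U \<noteq> 0"
  then have "(\<Sum>S\<in>Pow U. coeff a S * coeff b (U - S) * shuffle_sign S (U - S)) \<noteq> 0"
    by (simp add: ext_mult_def)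
  then obtain S where S: "S \<in> Pow U" "coeff a S * coeff b (U - S) * shuffle_sign S (U - S) \<noteq> 0"
    by (rule sum.not_neutral_contains_not_neutral)
  then have "coeff a S \<noteq> 0" "coeff b (U - S) \<noteq> 0"
    by (metis mult_zero_left mult_zero_right)+
  then have "S \<subseteq> {..<n} \<times> {..<n}" "U - S \<subseteq> {..<n} \<times> {..<n}"
    using a b unfolding supported_in_def by blast+
  then show "U \<subseteq> {..<n} \<times> {..<n}"
    by blast
qed

lemma supported_in_sq_mult:
  "(\<And>i j. supported_in n (A i j)) \<Longrightarrow> (\<And>i j. supported_in n (B i j)) \<Longrightarrow> supported_in n (sq_mult n A B i j)"
  by (simp add: sq_mult_def supported_in_sum supported_in_mult supported_in_zero)

lemma supported_in_sq_pow:
  "(\<And>i j. supported_in n (A i j)) \<Longrightarrow> supported_in n (sq_pow n A k i j)"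
proof (induction k arbitrary: i j)
  case 0
  have "supported_in n 1"
    using supported_in_scalar[of n 1] by simp
  then show ?case
    by (simp add: sq_one_def supported_in_zero)
qed (simp add: supported_in_sq_mult)

lemma supported_in_sq_trace: "(\<And>i j. supported_in n (A i j)) \<Longrightarrow> supported_in n (sq_trace n A)"
  by (simp add: sq_trace_def supported_in_sum)

lemma supported_in_gen_mat: "supported_in n (gen_mat n i j)"
  by (simp add: supported_in_def gen_mat_def ext_gen_def ext_zero_def)

text \<open>If \<open>x\<^sub>n\<^sub>n\<close> does not occur in \<open>S\<close>, the coefficient of \<open>a\<close> at \<open>S\<close> reappears, up to sign,
  as the coefficient of \<open>x\<^sub>n\<^sub>n a\<close> at \<open>S \<union> {x\<^sub>n\<^sub>n}\<close>.\<close>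

lemma generator_mult_eq_0:
  assumes supported: "supported_in n a" and zero: "generator n n * a = 0"
  shows "a = 0"
proof (rule exterior_eqI)
  fix S
  show "coeff a S = coeff 0 S"
  proof (cases "S \<subseteq> {..<n} \<times> {..<n}")
    case False
    then show ?thesis
      using supported by (auto simp: supported_in_def ext_zero_def)
  next
    case True
    then have "finite S" "(n, n) \<notin> S"
      by (auto intro: finite_subset)
    let ?U = "insert (n, n) S"
    have "coeff (generator n n * a) ?U
        = (\<Sum>T\<in>Pow ?U. if T = {(n, n)} then coeff a (?U - T) * shuffle_sign T (?U - T) else 0)"
      by (simp add: ext_mult_def) (intro sum.cong refl, auto simp: ext_gen_def)
    also have "\<dots> = coeff a S * shuffle_sign {(n, n)} S"
      using \<open>finite S\<close> \<open>(n, n) \<notin> S\<close> by (simp add: sum.delta)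
    finally have "coeff a S * shuffle_sign {(n, n)} S = 0"
      using zero by (simp add: ext_zero_def)
    then show ?thesis
      by (simp add: shuffle_sign_def ext_zero_def)
  qed
qed

section \<open>The trace identity\<close>

definition vw_mat :: "nat \<Rightarrow> (nat \<Rightarrow> complex) \<Rightarrow> (nat \<Rightarrow> complex) \<Rightarrow> exterior sqmat" where
  "vw_mat n v w = (\<lambda>i j. if i < n \<and> j < n then scalar (v i * w j) else 0)"

text \<open>\<open>gen_bilin n v w m\<close> is \<open>w\<^sup>t X\<^sup>m v = tr (X\<^sup>m v w\<^sup>t)\<close>.\<close>

definition gen_bilin :: "nat \<Rightarrow> (nat \<Rightarrow> complex) \<Rightarrow> (nat \<Rightarrow> complex) \<Rightarrow> nat \<Rightarrow> exterior" where
  "gen_bilin n v w m = sq_trace n (sq_mult n (sq_pow n (gen_mat n) m) (vw_mat n v w))"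

definition gen_trace :: "nat \<Rightarrow> nat \<Rightarrow> exterior" where
  "gen_trace n m = sq_trace n (sq_pow n (gen_mat n) m)"

definition sq_scale :: "exterior \<Rightarrow> exterior sqmat \<Rightarrow> exterior sqmat" where
  "sq_scale t A = (\<lambda>i j. t * A i j)"

lemma sq_mult_scale_left: "sq_mult n (sq_scale t A) B = sq_scale t (sq_mult n A B)"
  by (simp add: sq_mult_def sq_scale_def fun_eq_iff sum_distrib_left mult.assoc)

lemma sq_mult_scale_right:
  assumes "\<And>i j. has_parity 0 (A i j)"
  shows "sq_mult n A (sq_scale t B) = sq_scale t (sq_mult n A B)"
proof -
  have "A i k * (t * B k j) = t * (A i k * B k j)" for i k j
    using even_commute[OF assms, of i k t] by (simp flip: mult.assoc)
  then show ?thesis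
    by (simp add: sq_mult_def sq_scale_def fun_eq_iff sum_distrib_left)
qed

lemma sq_trace_scale: "sq_trace n (sq_scale t A) = t * sq_trace n A"
  by (simp add: sq_trace_def sq_scale_def sum_distrib_left)

lemma has_parity_gen_pow_even: "has_parity 0 (sq_pow n (gen_mat n) (2 * k) i j)"
  using has_parity_gen_pow[of "2 * k" n i j] by simp

lemma has_parity_vw_mat: "has_parity 0 (vw_mat n v w i j)"
  by (simp add: vw_mat_def has_parity_scalar)

lemma has_parity_gen_bilin_even: "has_parity 0 (gen_bilin n v w (2 * k))"
proof -
  have "has_parity ((0 + 0) mod 2) (sq_mult n (sq_pow n (gen_mat n) (2 * k)) (vw_mat n v w) i j)" for i j
    by (rule has_parity_sq_mult) (simp_all add: has_parity_gen_pow_even has_parity_vw_mat)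
  then show ?thesis
    by (simp add: gen_bilin_def sq_trace_def has_parity_sum)
qed

lemma scalar_mult_eq_0_iff:
  assumes "c \<noteq> 0"
  shows "scalar c * x = 0 \<longleftrightarrow> x = 0"
proof
  assume "scalar c * x = 0"
  then have "scalar (inverse c) * (scalar c * x) = 0"
    by simp
  then show "x = 0"
    using assms by (simp flip: mult.assoc scalar_mult)
qed simp

text \<open>The matrices \<open>Y = X\<^sup>2\<close>, \<open>Z = x\<^sub>n\<^sub>n X\<close> and \<open>B = v w\<^sup>t\<close>, read over the even subalgebra;
  \<open>Z\<close> is even because the extra generator \<open>x\<^sub>n\<^sub>n\<close> is odd.\<close>

definition even_Y :: "nat \<Rightarrow> even_exterior sqmat" where
  "even_Y n = to_even_mat (sq_pow n (gen_mat n) 2)"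

definition even_Z :: "nat \<Rightarrow> even_exterior sqmat" where
  "even_Z n = to_even_mat (sq_scale (generator n n) (gen_mat n))"

definition even_B :: "nat \<Rightarrow> (nat \<Rightarrow> complex) \<Rightarrow> (nat \<Rightarrow> complex) \<Rightarrow> even_exterior sqmat" where
  "even_B n v w = to_even_mat (vw_mat n v w)"

lemma of_even_mat_even_Y: "of_even_mat (even_Y n) = sq_pow n (gen_mat n) 2"
  unfolding even_Y_def by (rule of_even_mat_to_even_mat) (use has_parity_gen_pow_even[of n 1] in simp)

lemma of_even_mat_even_Y_pow: "of_even_mat (sq_pow n (even_Y n) k) = sq_pow n (gen_mat n) (2 * k)"
  by (simp add: of_even_mat_sq_pow of_even_mat_even_Y sq_pow_mult)

lemma of_even_mat_even_Z: "of_even_mat (even_Z n) = sq_scale (generator n n) (gen_mat n)"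
  unfolding even_Z_def sq_scale_def
  by (rule of_even_mat_to_even_mat) (use has_parity_mult[OF has_parity_generator has_parity_gen_mat] in simp)

lemma of_even_mat_even_B: "of_even_mat (even_B n v w) = vw_mat n v w"
  unfolding even_B_def by (rule of_even_mat_to_even_mat) (rule has_parity_vw_mat)

lemma traceless_powers_even_Y: "traceless_powers n (even_Y n)"
proof
  show "sq_supported n (even_Y n)"
    unfolding even_Y_def by (rule sq_supported_to_even_mat[OF sq_supported_sq_pow])
  show "sq_trace n (sq_pow n (even_Y n) k) = 0" if "k \<ge> 1" for k
    using sq_trace_gen_pow_even[OF that, of n]
    by (intro of_even_eqI) (simp add: of_even_sq_trace of_even_mat_even_Y_pow)
qed

lemma even_Y_even_Z_commute: "sq_mult n (even_Y n) (even_Z n) = sq_mult n (even_Z n) (even_Y n)"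
proof (rule of_even_mat_inject)
  show "of_even_mat (sq_mult n (even_Y n) (even_Z n)) = of_even_mat (sq_mult n (even_Z n) (even_Y n))"
    by (simp add: of_even_mat_sq_mult of_even_mat_even_Y of_even_mat_even_Z sq_mult_scale_left sq_mult_scale_right
        has_parity_gen_pow_even[of n 1, simplified] sq_pow_commute[OF refl sq_supported_gen_mat]
        del: sq_pow.simps)
qed

lemma sq_supported_even_Z: "sq_supported n (even_Z n)"
  unfolding even_Z_def
  by (rule sq_supported_to_even_mat) (simp add: sq_supported_def sq_scale_def gen_mat_def)

lemma of_even_trace_even_Y_B:
  "of_even (sq_trace n (sq_mult n (sq_pow n (even_Y n) s) (even_B n v w))) = gen_bilin n v w (2 * s)"
  by (simp add: of_even_sq_trace of_even_mat_sq_mult of_even_mat_even_Y_pow of_even_mat_even_B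
      gen_bilin_def)

lemma of_even_trace_even_Y_Z:
  "of_even (sq_trace n (sq_mult n (sq_pow n (even_Y n) k) (even_Z n)))
    = generator n n * gen_trace n (Suc (2 * k))"
  by (simp add: of_even_sq_trace of_even_mat_sq_mult of_even_mat_even_Y_pow of_even_mat_even_Z
      sq_mult_scale_right has_parity_gen_pow_even sq_trace_scale gen_trace_def)

lemma of_even_trace_even_Z_Y_B:
  "of_even (sq_trace n (sq_mult n (sq_mult n (even_Z n) (sq_pow n (even_Y n) r)) (even_B n v w)))
    = generator n n * gen_bilin n v w (Suc (2 * r))"
  by (simp add: of_even_sq_trace of_even_mat_sq_mult of_even_mat_even_Y_pow of_even_mat_even_Z
      of_even_mat_even_B sq_mult_scale_left sq_trace_scale gen_bilin_def
      sq_pow_Suc'[OF sq_supported_gen_mat] del: sq_pow.simps)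

text \<open>The \<open>n + 1\<close> factors \<open>Y, \<dots>, Y, Z, B\<close> make the alternating trace vanish.\<close>

lemma theta_trace_bilin_identity:
  assumes "n \<ge> 1"
  shows "(\<Sum>s\<le>n - 1. gen_bilin n v w (2 * s) * (generator n n * gen_trace n (Suc (2 * (n - 1 - s)))))
    = of_nat n * (generator n n * gen_bilin n v w (Suc (2 * (n - 1))))"
proof -
  interpret traceless_powers n "even_Y n"
    by (rule traceless_powers_even_Y)
  have "alt_Y (n - 1) [even_Z n, even_B n v w] = 0"
    using alt_trace_eq_0[of n "replicate (n - 1) (even_Y n) @ [even_Z n, even_B n v w]"] by simp
  then have "(-1) ^ (n - 1) * of_nat (fact (n - 1)) *
      ((\<Sum>s\<le>n - 1. sq_trace n (sq_mult n (sq_pow n (even_Y n) s) (even_B n v w))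
         * sq_trace n (sq_mult n (sq_pow n (even_Y n) (n - 1 - s)) (even_Z n)))
       - of_nat n * sq_trace n (sq_mult n (sq_mult n (even_Z n) (sq_pow n (even_Y n) (n - 1))) (even_B n v w)))
      = 0"
    using alt_Y_pair[OF even_Y_even_Z_commute sq_supported_even_Z, of "n - 1" "even_B n v w"] assms
    by simp
  from arg_cong[OF this, of of_even]
  have "scalar ((-1) ^ (n - 1) * fact (n - 1)) *
      ((\<Sum>s\<le>n - 1. gen_bilin n v w (2 * s) * (generator n n * gen_trace n (Suc (2 * (n - 1 - s)))))
       - of_nat n * (generator n n * gen_bilin n v w (Suc (2 * (n - 1))))) = 0"
    by (simp add: of_even_sum of_even_power of_even_of_nat of_even_trace_even_Y_B of_even_trace_even_Y_Z
        of_even_trace_even_Z_Y_B scalar_mult scalar_power scalar_uminus scalar_fact del: of_nat_fact)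
  then show ?thesis
    by (simp add: scalar_mult_eq_0_iff)
qed

lemma sum_gen_bilin_reorder:
  assumes "n \<ge> 1"
  shows "(\<Sum>s\<le>n - 1. gen_bilin n v w (2 * s) * (t * gen_trace n (Suc (2 * (n - 1 - s)))))
    = t * (\<Sum>k\<in>{0..n - 1}. gen_trace n (2 * k + 1) * gen_bilin n v w (2 * n - 2 - 2 * k))"
proof -
  have "gen_bilin n v w (2 * s) * (t * a) = t * (a * gen_bilin n v w (2 * s))" for s a
    using even_commute[OF has_parity_gen_bilin_even, of n v w s]
    by (metis mult.assoc)
  then have "(\<Sum>s\<le>n - 1. gen_bilin n v w (2 * s) * (t * gen_trace n (Suc (2 * (n - 1 - s)))))
      = t * (\<Sum>s\<le>n - 1. gen_trace n (Suc (2 * (n - 1 - s))) * gen_bilin n v w (2 * s))"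
    by (simp add: sum_distrib_left)
  also have "(\<Sum>s\<le>n - 1. gen_trace n (Suc (2 * (n - 1 - s))) * gen_bilin n v w (2 * s))
      = (\<Sum>k\<in>{0..n - 1}. gen_trace n (2 * k + 1) * gen_bilin n v w (2 * n - 2 - 2 * k))"
  proof (subst sum.atLeastAtMost_rev[of _ 0 "n - 1"], intro sum.cong)
    fix s assume "s \<in> {0..n - 1}"
    then have "2 * (n - 1 + 0 - s) + 1 = Suc (2 * (n - 1 - s))" "2 * n - 2 - 2 * (n - 1 + 0 - s) = 2 * s"
      using assms by auto
    then show "gen_trace n (Suc (2 * (n - 1 - s))) * gen_bilin n v w (2 * s)
        = gen_trace n (2 * (n - 1 + 0 - s) + 1) * gen_bilin n v w (2 * n - 2 - 2 * (n - 1 + 0 - s))"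
      by (simp only:)
  qed (simp add: atLeast0AtMost)
  finally show ?thesis .
qed

lemma trace_bilin_identity:
  assumes "n \<ge> 1"
  shows "(\<Sum>k\<in>{0..n - 1}. gen_trace n (2 * k + 1) * gen_bilin n v w (2 * n - 2 - 2 * k))
    = of_nat n * gen_bilin n v w (2 * n - 1)"
    (is "?S = ?T")
proof -
  have "Suc (2 * (n - 1)) = 2 * n - 1"
    using assms by simp
  then have "generator n n * ?S = of_nat n * (generator n n * gen_bilin n v w (2 * n - 1))"
    using theta_trace_bilin_identity[OF assms, of v w]
      sum_gen_bilin_reorder[OF assms, of v w "generator n n"] by simp
  also have "\<dots> = generator n n * ?T"
    by (metis mult.assoc mult_of_nat_commute)
  finally have "generator n n * ?S = generator n n * ?T" .
  then have "generator n n * (?S - ?T) = 0"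
    by (simp add: right_diff_distrib)
  moreover have "supported_in n (sq_pow n (gen_mat n) m i j)" for m i j
    by (rule supported_in_sq_pow) (rule supported_in_gen_mat)
  then have "supported_in n (gen_trace n m)" "supported_in n (gen_bilin n v w m)" for m
    by (auto simp: gen_trace_def gen_bilin_def vw_mat_def supported_in_zero supported_in_scalar
        intro!: supported_in_sq_trace supported_in_sq_mult)
  then have "supported_in n (?S - ?T)"
    using supported_in_scalar[of n "of_nat n"]
    by (auto simp: scalar_of_nat intro!: supported_in_diff supported_in_sum supported_in_mult)
  ultimately show ?thesis
    using generator_mult_eq_0[of n "?S - ?T"] by simp
qed

lemma Qsum_eq_zero: "Qsum n v w = ext_zero"
proof
  fix S
  define h where "h i j = v (i n) * w (j n) * ext_prod_list (map (\<lambda>k. mat_pow n Xmat 2 (i k) (j k)) [0..<n - 1]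
       @ [Xmat (i (n - 1)) (j (n - 1))]) S" for i j :: "nat \<Rightarrow> nat"
  have "{0..n} = {..<Suc n}"
    by auto
  then have "Qsum n v w S = (\<Sum>\<sigma>\<in>{\<sigma>. \<sigma> permutes {..<Suc n}}. \<Sum>i\<in>{..<Suc n} \<rightarrow>\<^sub>E {..<n}.
      of_int (sign \<sigma>) * h i (i \<circ> \<sigma>))"
    unfolding Qsum_def ext_sum_def ext_smult_def h_def by (simp add: mult.assoc)
  also have "\<dots> = 0"
    by (rule sum_permutes_PiE_eq_0) simp
  finally show "Qsum n v w S = ext_zero S"
    by (simp add: ext_zero_def)
qed

lemma mat_pow_Xmat:
  "i < n \<Longrightarrow> j < n \<Longrightarrow> mat_pow n Xmat m i j = coeff (sq_pow n (gen_mat n) m i j)"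
proof (induction m arbitrary: i j)
  case 0
  then show ?case by (simp add: mat_id_def sq_one_def)
next
  case (Suc m)
  then show ?case
    by (simp add: mat_mult_def sq_mult_def coeff_sum gen_mat_def Xmat_def ext_sum_def)
qed

lemma mat_trace_mat_pow_Xmat: "mat_trace n (mat_pow n Xmat m) = coeff (gen_trace n m)"
  by (simp add: gen_trace_def sq_trace_def mat_trace_def coeff_sum ext_sum_def mat_pow_Xmat
      del: mat_pow.simps)

lemma bilin_mat_pow_Xmat: "bilin n w (mat_pow n Xmat m) v = coeff (gen_bilin n v w m)"
proof -
  let ?P = "sq_pow n (gen_mat n) m"
  have "gen_bilin n v w m = (\<Sum>(i, k)\<in>{..<n} \<times> {..<n}. scalar (w i * v k) * ?P i k)"
    by (simp add: gen_bilin_def sq_trace_mult vw_mat_def sum.cartesian_product scalar_commute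
        mult.commute[of "v _"])
  then have "coeff (gen_bilin n v w m)
      = ext_sum (\<lambda>(i, k). coeff (scalar (w i * v k) * ?P i k)) ({..<n} \<times> {..<n})"
    by (simp add: coeff_sum split_def del: coeff_mult)
  also have "\<dots> = bilin n w (mat_pow n Xmat m) v"
    unfolding bilin_def ext_sum_def
    by (intro ext sum.cong refl)
      (auto simp: coeff_scalar_mult mat_pow_Xmat ext_smult_def simp del: coeff_mult mat_pow.simps)
  finally show ?thesis ..
qed

theorem proposition2p2:
  fixes n :: nat and v w :: "nat \<Rightarrow> complex"
  assumes "n \<ge> 1"
  shows "Qsum n v w =
    ext_smult ((-1) ^ n)
      (ext_add
        (ext_smult (fact n) (bilin n w (mat_pow n Xmat (2 * n - 1)) v))
        (ext_smult (- fact (n - 1))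
          (ext_sum (\<lambda>k. ext_mult (mat_trace n (mat_pow n Xmat (2 * k + 1)))
                                  (bilin n w (mat_pow n Xmat (2 * n - 2 - 2 * k)) v))
             {0..n - 1})))"
proof -
  let ?b = "gen_bilin n v w (2 * n - 1)"
  let ?S = "\<Sum>k\<in>{0..n - 1}. gen_trace n (2 * k + 1) * gen_bilin n v w (2 * n - 2 - 2 * k)"
  have "scalar (fact n) = scalar (fact (n - 1)) * of_nat n"
    using assms fact_reduce[of n, where 'a = complex]
    by (simp add: scalar_mult scalar_of_nat mult_of_nat_commute)
  then have "scalar (fact n) * ?b + scalar (- fact (n - 1)) * ?S = 0"
    unfolding trace_bilin_identity[OF assms] by (simp add: scalar_uminus mult.assoc)
  then have "ext_zero = coeff (scalar ((-1) ^ n) * (scalar (fact n) * ?b + scalar (- fact (n - 1)) * ?S))"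
    by simp
  then show ?thesis
    unfolding Qsum_eq_zero mat_trace_mat_pow_Xmat bilin_mat_pow_Xmat
    by (simp only: coeff_mult[symmetric] coeff_sum[symmetric] coeff_scalar_mult[symmetric]
        coeff_add[symmetric])
qed

end
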